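(* Let $\eta\in(0,1)$ and $\mathcal N_S>0$. For $N_S>0$ and $\xi\in[0,1]$ let $$I(\xi;N_S)=4N_S\left\{\frac{1-\xi}{1-2\eta^2\left(\sqrt{\xi N_S(1+\xi N_S)}-\xi N_S\right)}+\frac{\xi\left[(1-\eta^2)^2+\eta^4\right]}{(1-\eta^2)\left(1+2\xi N_S\eta^2(1-\eta^2)\right)}\right\},$$ and for real $M\ge1$ define the total quantum Fisher information $\mathcal I(M)=\max_{\xi\in[0,1]}M\,I(\xi;\mathcal N_S/M)$. Then the optimal number of probes is either $M=1$ or $M=\infty$, i.e. $\sup_{M\ge1}\mathcal I(M)=\max\{\mathcal I(1),\lim_{M\to\infty}\mathcal I(M)\}$.
   Context: $I(\xi;N_S)$ is the quantum Fisher information for estimating the transmission $\eta$ of a pure-loss (zero-temperature) bosonic channel with one single-mode pure displaced squeezed probe of mean photon number $N_S$, a fraction $\xi$ in squeezing and $1-\xi$ in displacement. Using $M$ independent probes with a total photon budget $\mathcal N_S=MN_S$ gives total quantum Fisher information $M\,I(\xi;\mathcal N_S/M)$; the number of probes is relaxed to a continuous variable $M\ge1$, with $M=\infty$ understood as the limit. *)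

theory Defs
  imports Complex_Main
begin

definition QFI :: "real \<Rightarrow> real \<Rightarrow> real \<Rightarrow> real" where
  "QFI eta xi NS = 4 * NS *
     ((1 - xi) / (1 - 2 * eta^2 * (sqrt (xi * NS * (1 + xi * NS)) - xi * NS))
      + xi * ((1 - eta^2)^2 + eta^4) / ((1 - eta^2) * (1 + 2 * xi * NS * eta^2 * (1 - eta^2))))"

definition totalQFI :: "real \<Rightarrow> real \<Rightarrow> real \<Rightarrow> real" where
  "totalQFI eta NStot M = (SUP xi\<in>{0..1}. M * QFI eta xi (NStot / M))"

end

theory Submission imports Defs begin

(* With n photons per probe, s = xi n of them squeezed, the QFI per photon is
   qfi_rate = (1 - xi) disp_rate(s) + xi sqz_rate(s), affine in xi for fixed s, and sqz_rate is
   decreasing.  For M probes with fraction xi, a single probe with fraction xi/M has the same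
   squeezed photon number s, so either disp_rate(s) <= sqz_rate(s) <= sqz_rate(0) and the M-probe
   value is at most 4 N sqz_rate(0), or the single probe does at least as well:
   I(M) <= max (I(1), 4 N sqz_rate(0)).  As M grows, s <= N/M -> 0, so disp_rate(s) -> 1
   uniformly in xi and I(M) -> 4 N max (1, sqz_rate(0)), which dominates 4 N sqz_rate(0). *)

definition sqz_gap :: "real \<Rightarrow> real" where
  "sqz_gap s = sqrt (s * (1 + s)) - s"

definition disp_rate :: "real \<Rightarrow> real \<Rightarrow> real" where
  "disp_rate eta s = 1 / (1 - 2 * eta^2 * sqz_gap s)"

definition sqz_rate :: "real \<Rightarrow> real \<Rightarrow> real" where
  "sqz_rate eta s = ((1 - eta^2)^2 + eta^4) / ((1 - eta^2) * (1 + 2 * s * eta^2 * (1 - eta^2)))"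

definition qfi_rate :: "real \<Rightarrow> real \<Rightarrow> real \<Rightarrow> real" where
  "qfi_rate eta xi n = (1 - xi) * disp_rate eta (xi * n) + xi * sqz_rate eta (xi * n)"

lemma QFI_eq_qfi_rate: "QFI eta xi n = 4 * n * qfi_rate eta xi n"
  by (simp add: QFI_def qfi_rate_def disp_rate_def sqz_rate_def sqz_gap_def mult.assoc)

lemma qfi_rate_0 [simp]: "qfi_rate eta 0 n = 1"
  by (simp add: qfi_rate_def disp_rate_def sqz_gap_def)

lemma qfi_rate_1 [simp]: "qfi_rate eta 1 n = sqz_rate eta n"
  by (simp add: qfi_rate_def)

lemma convex_comb_le_max:
  fixes a b t :: real
  assumes "0 \<le> t" "t \<le> 1"
  shows "(1 - t) * a + t * b \<le> max a b"
proof -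
  have "(1 - t) * a + t * b \<le> (1 - t) * max a b + t * max a b"
    using assms by (intro add_mono mult_left_mono) auto
  then show ?thesis by (simp add: algebra_simps)
qed

lemma sqz_gap_less_half:
  assumes "0 \<le> s"
  shows "sqz_gap s < 1/2"
proof -
  have "sqrt (s * (1 + s)) < sqrt ((s + 1/2)^2)"
    by (rule real_sqrt_less_mono) (simp add: power2_eq_square algebra_simps)
  also have "\<dots> = s + 1/2" using assms by simp
  finally show ?thesis unfolding sqz_gap_def by simp
qed

lemma sqz_gap_le_sqrt:
  assumes "0 \<le> s"
  shows "sqz_gap s \<le> sqrt s"
proof -
  have "sqrt (s * (1 + s)) \<le> sqrt ((sqrt s + s)^2)"
    using assms by (intro real_sqrt_le_mono) (simp add: power2_eq_square algebra_simps)
  also have "\<dots> = sqrt s + s" using assms by simp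
  finally show ?thesis unfolding sqz_gap_def by simp
qed

lemma disp_rate_le:
  assumes "eta^2 < 1" "0 \<le> s"
  shows "disp_rate eta s \<le> 1 / (1 - eta^2)"
proof -
  have "eta^2 * (2 * sqz_gap s) \<le> eta^2 * 1"
    using sqz_gap_less_half[OF assms(2)] by (intro mult_left_mono) auto
  then have "1 - eta^2 \<le> 1 - 2 * eta^2 * sqz_gap s" by simp
  with assms(1) show ?thesis
    unfolding disp_rate_def by (intro divide_left_mono mult_pos_pos) auto
qed

lemma disp_rate_le_sqrt:
  assumes "0 \<le> s" "s \<le> n" "2 * eta^2 * sqrt n < 1"
  shows "disp_rate eta s \<le> 1 / (1 - 2 * eta^2 * sqrt n)"
proof -
  have "sqz_gap s \<le> sqrt n"
    using sqz_gap_le_sqrt[OF assms(1)] real_sqrt_le_mono[OF assms(2)] by linarith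
  then have "2 * eta^2 * sqz_gap s \<le> 2 * eta^2 * sqrt n"
    by (intro mult_left_mono) auto
  with assms(3) show ?thesis
    unfolding disp_rate_def by (intro divide_left_mono mult_pos_pos) auto
qed

lemma sqz_rate_antimono:
  assumes "eta^2 < 1" "0 \<le> s" "s \<le> t"
  shows "sqz_rate eta t \<le> sqz_rate eta s"
proof -
  have pos: "0 < 1 - eta^2" using assms(1) by simp
  have "2 * s * eta^2 * (1 - eta^2) \<le> 2 * t * eta^2 * (1 - eta^2)"
    using assms pos by (intro mult_right_mono) auto
  moreover have "0 \<le> 2 * s * eta^2 * (1 - eta^2)"
    using assms(2) pos by simp
  ultimately show ?thesis
    unfolding sqz_rate_def using pos
    by (intro divide_left_mono mult_left_mono mult_pos_pos) auto
qed

lemma qfi_rate_le_max_rates: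
  "0 \<le> xi \<Longrightarrow> xi \<le> 1 \<Longrightarrow>
     qfi_rate eta xi n \<le> max (disp_rate eta (xi * n)) (sqz_rate eta (xi * n))"
  unfolding qfi_rate_def by (rule convex_comb_le_max)

lemma qfi_rate_le_same_squeezing:
  assumes "xi' \<le> xi" "xi \<le> 1" "xi' * n' = xi * n"
  shows "qfi_rate eta xi n \<le> max (qfi_rate eta xi' n') (sqz_rate eta (xi * n))"
proof (cases "disp_rate eta (xi * n) \<le> sqz_rate eta (xi * n)")
  case True
  then have "(1 - xi) * disp_rate eta (xi * n) \<le> (1 - xi) * sqz_rate eta (xi * n)"
    using assms(2) by (intro mult_left_mono) auto
  then show ?thesis unfolding qfi_rate_def by (simp add: algebra_simps)
next
  case False
  have "qfi_rate eta xi n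
          = disp_rate eta (xi * n) - xi * (disp_rate eta (xi * n) - sqz_rate eta (xi * n))"
    unfolding qfi_rate_def by (simp add: algebra_simps)
  also have "\<dots> \<le> disp_rate eta (xi * n) - xi' * (disp_rate eta (xi * n) - sqz_rate eta (xi * n))"
    using False assms(1) by (intro diff_left_mono mult_right_mono) auto
  also have "\<dots> = qfi_rate eta xi' n'"
    unfolding qfi_rate_def assms(3) by (simp add: algebra_simps)
  finally show ?thesis by simp
qed

lemma totalQFI_eq_SUP:
  "0 < M \<Longrightarrow> totalQFI eta N M = (SUP xi\<in>{0..1}. 4 * N * qfi_rate eta xi (N / M))"
  unfolding totalQFI_def QFI_eq_qfi_rate by (intro SUP_cong) auto

lemma totalQFI_ge:
  assumes "eta^2 < 1" "0 < N" "0 < M" "0 \<le> xi" "xi \<le> 1"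
  shows "4 * N * qfi_rate eta xi (N / M) \<le> totalQFI eta N M"
  unfolding totalQFI_eq_SUP[OF assms(3)]
proof (rule cSUP_upper)
  show "bdd_above ((\<lambda>xi. 4 * N * qfi_rate eta xi (N / M)) ` {0..1})"
  proof (rule bdd_aboveI2)
    fix x :: real assume x: "x \<in> {0..1}"
    have s: "0 \<le> x * (N / M)" using x assms by simp
    have "qfi_rate eta x (N / M) \<le> max (disp_rate eta (x * (N / M))) (sqz_rate eta (x * (N / M)))"
      using x by (intro qfi_rate_le_max_rates) auto
    also have "\<dots> \<le> max (1 / (1 - eta^2)) (sqz_rate eta 0)"
      using s assms(1) by (intro max.mono disp_rate_le sqz_rate_antimono) auto
    finally have "qfi_rate eta x (N / M) \<le> max (1 / (1 - eta^2)) (sqz_rate eta 0)" .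
    then show "4 * N * qfi_rate eta x (N / M) \<le> 4 * N * max (1 / (1 - eta^2)) (sqz_rate eta 0)"
      using assms(2) by simp
  qed
qed (use assms in auto)

lemma totalQFI_le:
  "0 < M \<Longrightarrow> (\<And>xi. 0 \<le> xi \<Longrightarrow> xi \<le> 1 \<Longrightarrow> 4 * N * qfi_rate eta xi (N / M) \<le> B)
     \<Longrightarrow> totalQFI eta N M \<le> B"
  unfolding totalQFI_eq_SUP by (intro cSUP_least) auto

lemma totalQFI_le_single_probe:
  assumes "eta^2 < 1" "0 < N" "1 \<le> M"
  shows "totalQFI eta N M \<le> max (totalQFI eta N 1) (4 * N * sqz_rate eta 0)"
proof (rule totalQFI_le)
  fix xi :: real assume xi: "0 \<le> xi" "xi \<le> 1"
  have "xi / M \<le> xi" "(xi / M) * N = xi * (N / M)"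
    using xi assms(3) by (auto simp: divide_le_eq mult_le_cancel_left1)
  then have "qfi_rate eta xi (N / M)
               \<le> max (qfi_rate eta (xi / M) N) (sqz_rate eta (xi * (N / M)))"
    using xi by (intro qfi_rate_le_same_squeezing) auto
  also have "\<dots> \<le> max (qfi_rate eta (xi / M) N) (sqz_rate eta 0)"
    using xi assms by (intro max.mono sqz_rate_antimono) auto
  finally have "4 * N * qfi_rate eta xi (N / M)
                  \<le> 4 * N * max (qfi_rate eta (xi / M) N) (sqz_rate eta 0)"
    using assms(2) by simp
  also have "\<dots> = max (4 * N * qfi_rate eta (xi / M) (N / 1)) (4 * N * sqz_rate eta 0)"
    using assms(2) by (simp add: max_mult_distrib_left)
  also have "\<dots> \<le> max (totalQFI eta N 1) (4 * N * sqz_rate eta 0)"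
    using xi assms by (intro max.mono totalQFI_ge) (auto simp: divide_le_eq)
  finally show "4 * N * qfi_rate eta xi (N / M) \<le> max (totalQFI eta N 1) (4 * N * sqz_rate eta 0)" .
qed (use assms in simp)

lemma totalQFI_lower:
  assumes "eta^2 < 1" "0 < N" "0 < M"
  shows "4 * N * max 1 (sqz_rate eta (N / M)) \<le> totalQFI eta N M"
  using totalQFI_ge[OF assms, of 0] totalQFI_ge[OF assms, of 1] assms(2)
  by (simp add: max_mult_distrib_left)

lemma totalQFI_upper:
  assumes "eta^2 < 1" "0 < N" "0 < M" "2 * eta^2 * sqrt (N / M) < 1"
  shows "totalQFI eta N M \<le> 4 * N * max (1 / (1 - 2 * eta^2 * sqrt (N / M))) (sqz_rate eta 0)"
proof (rule totalQFI_le)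
  fix xi :: real assume xi: "0 \<le> xi" "xi \<le> 1"
  have s: "0 \<le> xi * (N / M)" "xi * (N / M) \<le> N / M"
    using xi assms mult_left_le_one_le[of "N / M" xi] by auto
  have "qfi_rate eta xi (N / M)
          \<le> max (disp_rate eta (xi * (N / M))) (sqz_rate eta (xi * (N / M)))"
    using xi by (rule qfi_rate_le_max_rates)
  also have "\<dots> \<le> max (1 / (1 - 2 * eta^2 * sqrt (N / M))) (sqz_rate eta 0)"
    using s assms by (intro max.mono disp_rate_le_sqrt sqz_rate_antimono) auto
  finally show "4 * N * qfi_rate eta xi (N / M)
                  \<le> 4 * N * max (1 / (1 - 2 * eta^2 * sqrt (N / M))) (sqz_rate eta 0)"
    using assms(2) by simp
qed (use assms in simp)

lemma tendsto_totalQFI: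
  assumes "eta^2 < 1" "0 < N"
  shows "(totalQFI eta N \<longlongrightarrow> 4 * N * max 1 (sqz_rate eta 0)) at_top"
proof -
  have per_probe: "((\<lambda>M::real. N / M) \<longlongrightarrow> 0) at_top"
    by (intro tendsto_divide_0[OF tendsto_const] filterlim_at_top_imp_at_infinity filterlim_ident)
  have gap_term: "((\<lambda>M. 2 * eta^2 * sqrt (N / M)) \<longlongrightarrow> 0) at_top"
    using tendsto_real_sqrt[OF per_probe] by (auto intro: tendsto_mult_right_zero)
  have lower: "((\<lambda>M. 4 * N * max 1 (sqz_rate eta (N / M)))
                  \<longlongrightarrow> 4 * N * max 1 (sqz_rate eta 0)) at_top"
    unfolding sqz_rate_def using assms(1) by (intro tendsto_intros per_probe) auto
  have upper: "((\<lambda>M. 4 * N * max (1 / (1 - 2 * eta^2 * sqrt (N / M))) (sqz_rate eta 0))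
                  \<longlongrightarrow> 4 * N * max 1 (sqz_rate eta 0)) at_top"
    using tendsto_divide[OF tendsto_const tendsto_diff[OF tendsto_const gap_term], of 1 1]
    by (intro tendsto_intros) auto
  have pos: "\<forall>\<^sub>F M in at_top. (0::real) < M"
    by (rule eventually_gt_at_top)
  have small: "\<forall>\<^sub>F M in at_top. 2 * eta^2 * sqrt (N / M) < 1"
    using gap_term by (rule order_tendstoD) simp
  show ?thesis
  proof (rule tendsto_sandwich[OF _ _ lower upper])
    show "\<forall>\<^sub>F M in at_top. 4 * N * max 1 (sqz_rate eta (N / M)) \<le> totalQFI eta N M"
      using pos by eventually_elim (rule totalQFI_lower[OF assms])
    show "\<forall>\<^sub>F M in at_top.
            totalQFI eta N M \<le> 4 * N * max (1 / (1 - 2 * eta^2 * sqrt (N / M))) (sqz_rate eta 0)"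
      using pos small by eventually_elim (rule totalQFI_upper[OF assms])
  qed
qed

lemma SUP_atLeast_eq_max_lim:
  fixes f :: "real \<Rightarrow> real"
  assumes lim: "(f \<longlongrightarrow> L) at_top" and bound: "\<And>M. a \<le> M \<Longrightarrow> f M \<le> max (f a) L"
  shows "bdd_above (f ` {a..})" "(SUP M\<in>{a..}. f M) = max (f a) L"
proof -
  show bdd: "bdd_above (f ` {a..})"
    using bound by (intro bdd_aboveI2) auto
  have "f a \<le> (SUP M\<in>{a..}. f M)"
    using bdd by (intro cSUP_upper) auto
  moreover have "L \<le> (SUP M\<in>{a..}. f M)"
  proof (rule tendsto_le[OF _ tendsto_const lim])
    show "\<forall>\<^sub>F M in at_top. f M \<le> (SUP M\<in>{a..}. f M)"
      using eventually_ge_at_top[of a] by eventually_elim (use bdd in \<open>auto intro: cSUP_upper\<close>)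
  qed simp
  moreover have "(SUP M\<in>{a..}. f M) \<le> max (f a) L"
    using bound by (intro cSUP_least) auto
  ultimately show "(SUP M\<in>{a..}. f M) = max (f a) L"
    by simp
qed

theorem proposition5:
  fixes eta NStot :: real
  assumes "0 < eta" "eta < 1" "0 < NStot"
  shows "\<exists>L. (totalQFI eta NStot \<longlongrightarrow> L) at_top
           \<and> bdd_above (totalQFI eta NStot ` {1..})
           \<and> (SUP M\<in>{1..}. totalQFI eta NStot M) = max (totalQFI eta NStot 1) L"
proof -
  have eta: "eta^2 < 1" using assms(1,2) by (simp add: power_less_one_iff)
  define L where "L = 4 * NStot * max 1 (sqz_rate eta 0)"
  have lim: "(totalQFI eta NStot \<longlongrightarrow> L) at_top"
    unfolding L_def using eta assms(3) by (rule tendsto_totalQFI)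
  have "totalQFI eta NStot M \<le> max (totalQFI eta NStot 1) L" if "1 \<le> M" for M
  proof -
    have "4 * NStot * sqz_rate eta 0 \<le> L"
      unfolding L_def using assms(3) by simp
    then show ?thesis
      using totalQFI_le_single_probe[OF eta assms(3) that] by linarith
  qed
  with lim show ?thesis
    using SUP_atLeast_eq_max_lim[of "totalQFI eta NStot" L 1] by blast
qed

end
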